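(* In the two-bus model of the context, let $\Omega$ be the set of all instances $\boldsymbol\omega=(\overline{\mathbf q},\mathbf d)$ with $\overline{\mathbf q},\mathbf d\ge 0$, $d_1+d_2>0$, that are feasible for both \textsf{ED-2b} and \textsf{SCED-2b}. Then $$\mathsf{PoS}:=\sup_{\boldsymbol\omega\in\Omega}\mathsf{PoS}(\boldsymbol\omega)=\frac{\alpha_2}{\alpha_1}-\frac{(\alpha_2-\alpha_1)f^{\mathsf{sc}}}{\alpha_1 f^{\mathsf{ed}}},$$ and this value is attained by any instance with $d_1=0$, $d_2=f^{\mathsf{ed}}$, $\overline q_1\ge f^{\mathsf{ed}}$, and $\overline q_2\ge f^{\mathsf{ed}}-f^{\mathsf{sc}}$.
   Context: Two-bus network: buses $v_1,v_2$ joined by two parallel lines $e_1,e_2$ with susceptances $B_1,B_2>0$ and thermal limits $\overline f_1,\overline f_2>0$. Bus $i\in\{1,2\}$ has a generator with capacity $\overline q_i\ge 0$ and linear cost $\alpha_i q_i$, and a demand $d_i\ge 0$; throughout $0<\alpha_1\le\alpha_2$ (bus 1 is the cheap bus). An instance is $\boldsymbol\omega=(\overline{\mathbf q},\mathbf d)$ with $\overline{\mathbf q}=(\overline q_1,\overline q_2)$, $\mathbf d=(d_1,d_2)$. Define $f^{\mathsf{ed}}:=(B_1+B_2)\min\{\overline f_1/B_1,\overline f_2/B_2\}$ and $f^{\mathsf{sc}}:=\min\{\overline f_1,\overline f_2\}$ (note $f^{\mathsf{sc}}\le f^{\mathsf{ed}}$). The economic dispatch problem \textsf{ED-2b} is: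 minimize $\alpha_1q_1+\alpha_2q_2$ over $(q_1,q_2)$ subject to $0\le q_1\le\overline q_1$, $0\le q_2\le\overline q_2$, $q_1+q_2=d_1+d_2$, and $-f^{\mathsf{ed}}\le q_1-d_1\le f^{\mathsf{ed}}$. The security-constrained problem \textsf{SCED-2b} is the same problem with the additional constraint $-f^{\mathsf{sc}}\le q_1-d_1\le f^{\mathsf{sc}}$. Let $c^\star_{\mathsf{ed}}(\boldsymbol\omega)$ and $c^\star_{\mathsf{sc}}(\boldsymbol\omega)$ be the optimal values of \textsf{ED-2b} and \textsf{SCED-2b} for an instance $\boldsymbol\omega$ feasible for both. The price of security of $\boldsymbol\omega$ is $\mathsf{PoS}(\boldsymbol\omega):=c^\star_{\mathsf{sc}}(\boldsymbol\omega)/c^\star_{\mathsf{ed}}(\boldsymbol\omega)$. *)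

theory Defs
  imports "HOL-Analysis.Analysis"
begin

text \<open>Two-bus network. Line parameters: susceptances B1 B2 and thermal limits fb1 fb2.\<close>

definition f_ed :: "real \<Rightarrow> real \<Rightarrow> real \<Rightarrow> real \<Rightarrow> real" where
  "f_ed B1 B2 fb1 fb2 = (B1 + B2) * min (fb1 / B1) (fb2 / B2)"

definition f_sc :: "real \<Rightarrow> real \<Rightarrow> real" where
  "f_sc fb1 fb2 = min fb1 fb2"

text \<open>Feasible set of the dispatch problem with transfer limit F, for an instance
  with capacities qb1 qb2 and demands d1 d2. ED-2b uses F = f_ed; SCED-2b adds the
  constraint with f_sc, and since f_sc \<le> f_ed its feasible set is the one with
  both constraints.\<close>

definition ed_feasible :: "real \<Rightarrow> real \<Rightarrow> real \<Rightarrow> real \<Rightarrow> real \<Rightarrow> real \<Rightarrow> real \<Rightarrow> real \<Rightarrow> (real \<times> real) set" where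
  "ed_feasible B1 B2 fb1 fb2 qb1 qb2 d1 d2 =
     {(q1, q2). 0 \<le> q1 \<and> q1 \<le> qb1 \<and> 0 \<le> q2 \<and> q2 \<le> qb2 \<and> q1 + q2 = d1 + d2 \<and>
        - f_ed B1 B2 fb1 fb2 \<le> q1 - d1 \<and> q1 - d1 \<le> f_ed B1 B2 fb1 fb2}"

definition sc_feasible :: "real \<Rightarrow> real \<Rightarrow> real \<Rightarrow> real \<Rightarrow> real \<Rightarrow> real \<Rightarrow> real \<Rightarrow> real \<Rightarrow> (real \<times> real) set" where
  "sc_feasible B1 B2 fb1 fb2 qb1 qb2 d1 d2 =
     {(q1, q2). (q1, q2) \<in> ed_feasible B1 B2 fb1 fb2 qb1 qb2 d1 d2 \<and>
        - f_sc fb1 fb2 \<le> q1 - d1 \<and> q1 - d1 \<le> f_sc fb1 fb2}"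

definition c_ed :: "real \<Rightarrow> real \<Rightarrow> real \<Rightarrow> real \<Rightarrow> real \<Rightarrow> real \<Rightarrow> real \<Rightarrow> real \<Rightarrow> real \<Rightarrow> real \<Rightarrow> real" where
  "c_ed a1 a2 B1 B2 fb1 fb2 qb1 qb2 d1 d2 =
     Inf ((\<lambda>(q1, q2). a1 * q1 + a2 * q2) ` ed_feasible B1 B2 fb1 fb2 qb1 qb2 d1 d2)"

definition c_sc :: "real \<Rightarrow> real \<Rightarrow> real \<Rightarrow> real \<Rightarrow> real \<Rightarrow> real \<Rightarrow> real \<Rightarrow> real \<Rightarrow> real \<Rightarrow> real \<Rightarrow> real" where
  "c_sc a1 a2 B1 B2 fb1 fb2 qb1 qb2 d1 d2 =
     Inf ((\<lambda>(q1, q2). a1 * q1 + a2 * q2) ` sc_feasible B1 B2 fb1 fb2 qb1 qb2 d1 d2)"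

definition PoS :: "real \<Rightarrow> real \<Rightarrow> real \<Rightarrow> real \<Rightarrow> real \<Rightarrow> real \<Rightarrow> real \<Rightarrow> real \<Rightarrow> real \<Rightarrow> real \<Rightarrow> real" where
  "PoS a1 a2 B1 B2 fb1 fb2 qb1 qb2 d1 d2 =
     c_sc a1 a2 B1 B2 fb1 fb2 qb1 qb2 d1 d2 / c_ed a1 a2 B1 B2 fb1 fb2 qb1 qb2 d1 d2"

definition Omega :: "real \<Rightarrow> real \<Rightarrow> real \<Rightarrow> real \<Rightarrow> (real \<times> real \<times> real \<times> real) set" where
  "Omega B1 B2 fb1 fb2 =
     {(qb1, qb2, d1, d2). 0 \<le> qb1 \<and> 0 \<le> qb2 \<and> 0 \<le> d1 \<and> 0 \<le> d2 \<and> 0 < d1 + d2 \<and>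
        ed_feasible B1 B2 fb1 fb2 qb1 qb2 d1 d2 \<noteq> {} \<and>
        sc_feasible B1 B2 fb1 fb2 qb1 qb2 d1 d2 \<noteq> {}}"

end

theory Submission
  imports Defs
begin

text \<open>With a single transfer limit F the linear cost is minimised in merit order: the cheap
  generator 1 produces as much as its capacity, the limit and the total demand permit. Tightening
  the limit from f_ed to f_sc shifts at most y - f_sc units to bus 2, where y = q1 - d1 \<le> f_ed
  is the export of the unconstrained dispatch, and each shifted unit costs a2 - a1 more, while the
  unconstrained cost is at least a1 y. Since (y - f_sc) / y increases with y, the cost ratio is
  largest for y = f_ed, which the instance d1 = 0, d2 = f_ed realises.\<close>

definition dispatch_region :: "real \<Rightarrow> real \<Rightarrow> real \<Rightarrow> real \<Rightarrow> real \<Rightarrow> (real \<times> real) set" where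
  "dispatch_region qb1 qb2 d1 d2 F =
     {(q1, q2). 0 \<le> q1 \<and> q1 \<le> qb1 \<and> 0 \<le> q2 \<and> q2 \<le> qb2 \<and> q1 + q2 = d1 + d2 \<and>
        - F \<le> q1 - d1 \<and> q1 - d1 \<le> F}"

definition merit_order_q1 :: "real \<Rightarrow> real \<Rightarrow> real \<Rightarrow> real \<Rightarrow> real" where
  "merit_order_q1 qb1 d1 d2 F = min qb1 (min (d1 + F) (d1 + d2))"

lemma f_sc_pos: "0 < fb1 \<Longrightarrow> 0 < fb2 \<Longrightarrow> 0 < f_sc fb1 fb2"
  by (simp add: f_sc_def)

lemma f_sc_le_f_ed:
  assumes "0 < B1" "0 < B2" "0 < fb1" "0 < fb2"
  shows "f_sc fb1 fb2 \<le> f_ed B1 B2 fb1 fb2"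
proof -
  have "fb1 \<le> (B1 + B2) * (fb1 / B1)" "fb2 \<le> (B1 + B2) * (fb2 / B2)"
    using assms by (simp_all add: field_simps)
  then show ?thesis
    unfolding f_sc_def f_ed_def min_def by auto
qed

lemma ed_feasible_eq_dispatch_region:
  "ed_feasible B1 B2 fb1 fb2 qb1 qb2 d1 d2 = dispatch_region qb1 qb2 d1 d2 (f_ed B1 B2 fb1 fb2)"
  by (simp add: ed_feasible_def dispatch_region_def)

lemma sc_feasible_eq_dispatch_region:
  assumes "f_sc fb1 fb2 \<le> f_ed B1 B2 fb1 fb2"
  shows "sc_feasible B1 B2 fb1 fb2 qb1 qb2 d1 d2 = dispatch_region qb1 qb2 d1 d2 (f_sc fb1 fb2)"
  using assms by (auto simp: sc_feasible_def ed_feasible_def dispatch_region_def)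

lemma merit_order_q1_in_dispatch_region:
  assumes "dispatch_region qb1 qb2 d1 d2 F \<noteq> {}"
  shows "(merit_order_q1 qb1 d1 d2 F, d1 + d2 - merit_order_q1 qb1 d1 d2 F)
           \<in> dispatch_region qb1 qb2 d1 d2 F"
  using assms by (auto simp: dispatch_region_def merit_order_q1_def)

lemma Inf_dispatch_cost:
  assumes "a1 \<le> a2" "dispatch_region qb1 qb2 d1 d2 F \<noteq> {}"
  defines "x \<equiv> merit_order_q1 qb1 d1 d2 F"
  shows "Inf ((\<lambda>(q1, q2). a1 * q1 + a2 * q2) ` dispatch_region qb1 qb2 d1 d2 F)
           = a1 * x + a2 * (d1 + d2 - x)"
proof (rule cInf_eq_minimum)
  show "a1 * x + a2 * (d1 + d2 - x) \<in> (\<lambda>(q1, q2). a1 * q1 + a2 * q2) ` dispatch_region qb1 qb2 d1 d2 F"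
    using merit_order_q1_in_dispatch_region[OF assms(2)] unfolding x_def by force
next
  fix c assume "c \<in> (\<lambda>(q1, q2). a1 * q1 + a2 * q2) ` dispatch_region qb1 qb2 d1 d2 F"
  then obtain q1 q2 where "(q1, q2) \<in> dispatch_region qb1 qb2 d1 d2 F" "c = a1 * q1 + a2 * q2"
    by auto
  then have q1: "q1 \<le> x" and c: "c = a1 * q1 + a2 * (d1 + d2 - q1)"
    by (auto simp: dispatch_region_def x_def merit_order_q1_def)
  have "0 \<le> (a2 - a1) * (x - q1)"
    using assms(1) q1 by simp
  then show "a1 * x + a2 * (d1 + d2 - x) \<le> c"
    unfolding c by (simp add: algebra_simps)
qed

lemma merit_order_cost_ratio_le:
  fixes a1 a2 S E qb1 d1 d2 :: real
  assumes "0 < a1" "a1 \<le> a2" "0 < S" "S \<le> E" "0 \<le> d1" "0 < d1 + d2"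
  defines "xs \<equiv> merit_order_q1 qb1 d1 d2 S" and "xe \<equiv> merit_order_q1 qb1 d1 d2 E"
  shows "(a1 * xs + a2 * (d1 + d2 - xs)) / (a1 * xe + a2 * (d1 + d2 - xe))
           \<le> a2 / a1 - (a2 - a1) * S / (a1 * E)"
proof -
  define k where "k = a2 - a1"
  define ce where "ce = a1 * xe + a2 * (d1 + d2 - xe)"
  have k: "0 \<le> k" using assms(2) by (simp add: k_def)
  have xe_le: "xe \<le> d1 + d2" "xe \<le> d1 + E"
    by (simp_all add: xe_def merit_order_q1_def)
  have "0 \<le> a2 * (d1 + d2 - xe)" "a1 * (d1 + d2 - xe) \<le> a2 * (d1 + d2 - xe)"
    using xe_le assms(1,2) by (simp_all add: mult_right_mono)
  then have ce_ge: "a1 * xe \<le> ce" "a1 * (d1 + d2) \<le> ce"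
    by (simp_all add: ce_def algebra_simps)
  have ce_pos: "0 < ce"
    using ce_ge(2) assms(1,6) by (smt (verit) mult_pos_pos)
  have cs: "a1 * xs + a2 * (d1 + d2 - xs) = ce + k * (xe - xs)"
    by (simp add: ce_def k_def algebra_simps)
  have bound: "a2 / a1 - (a2 - a1) * S / (a1 * E) = 1 + k * (E - S) / (a1 * E)"
    using assms(1,3,4) by (simp add: k_def field_simps)
  have "k * (xe - xs) / ce \<le> k * (E - S) / (a1 * E)"
  proof (cases "xs = xe")
    case True
    then show ?thesis using k assms(1,3,4) by simp
  next
    case False
    then have xs: "xs = d1 + S"
      using assms(4) by (auto simp: xs_def xe_def merit_order_q1_def min_def split: if_splits)
    define y where "y = xe - d1"
    have "xs \<le> xe"
      using assms(4) by (auto simp: xs_def xe_def merit_order_q1_def)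
    then have y: "S \<le> y" "y \<le> E"
      using xe_le(2) unfolding y_def xs by auto
    have "0 < a1 * y" "a1 * y \<le> ce"
      using ce_ge(1) y(1) assms(1,3,5) unfolding y_def by (simp, smt (verit) mult_left_mono)
    then have "k * (y - S) / ce \<le> k * (y - S) / (a1 * y)"
      using k y(1) by (intro divide_left_mono) auto
    also have "\<dots> \<le> k * (E - S) / (a1 * E)"
      using k y assms(1,3) by (simp add: divide_simps algebra_simps) (metis mult.commute mult_left_mono)
    finally show ?thesis
      by (simp add: xs y_def diff_diff_eq)
  qed
  then show ?thesis
    unfolding cs bound ce_def[symmetric] using ce_pos by (simp add: add_divide_distrib)
qed

lemma PoS_eq_merit_order_cost_ratio:
  assumes "a1 \<le> a2" "0 < B1" "0 < B2" "0 < fb1" "0 < fb2"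
    and "ed_feasible B1 B2 fb1 fb2 qb1 qb2 d1 d2 \<noteq> {}"
    and "sc_feasible B1 B2 fb1 fb2 qb1 qb2 d1 d2 \<noteq> {}"
  defines "xs \<equiv> merit_order_q1 qb1 d1 d2 (f_sc fb1 fb2)"
    and "xe \<equiv> merit_order_q1 qb1 d1 d2 (f_ed B1 B2 fb1 fb2)"
  shows "PoS a1 a2 B1 B2 fb1 fb2 qb1 qb2 d1 d2
           = (a1 * xs + a2 * (d1 + d2 - xs)) / (a1 * xe + a2 * (d1 + d2 - xe))"
proof -
  note sc_region = sc_feasible_eq_dispatch_region[OF f_sc_le_f_ed[OF assms(2-5)]]
  show ?thesis
    using assms(6,7) Inf_dispatch_cost[OF assms(1)]
    unfolding PoS_def c_sc_def c_ed_def sc_region ed_feasible_eq_dispatch_region xs_def xe_def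
    by simp
qed

lemma PoS_le:
  assumes "0 < a1" "a1 \<le> a2" "0 < B1" "0 < B2" "0 < fb1" "0 < fb2"
    and "(qb1, qb2, d1, d2) \<in> Omega B1 B2 fb1 fb2"
  shows "PoS a1 a2 B1 B2 fb1 fb2 qb1 qb2 d1 d2
           \<le> a2 / a1 - (a2 - a1) * f_sc fb1 fb2 / (a1 * f_ed B1 B2 fb1 fb2)"
  using assms(7) merit_order_cost_ratio_le[OF assms(1,2) f_sc_pos[OF assms(5,6)] f_sc_le_f_ed[OF assms(3-6)]]
  by (auto simp: Omega_def PoS_eq_merit_order_cost_ratio[OF assms(2-6)])

lemma PoS_extremal_instance:
  assumes "0 < a1" "a1 \<le> a2" "0 < B1" "0 < B2" "0 < fb1" "0 < fb2"
  defines "E \<equiv> f_ed B1 B2 fb1 fb2" and "S \<equiv> f_sc fb1 fb2"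
  assumes "E \<le> qb1" "E - S \<le> qb2"
  shows "(qb1, qb2, 0, E) \<in> Omega B1 B2 fb1 fb2"
    and "PoS a1 a2 B1 B2 fb1 fb2 qb1 qb2 0 E = a2 / a1 - (a2 - a1) * S / (a1 * E)"
proof -
  have S: "0 < S" "S \<le> E"
    unfolding S_def E_def using f_sc_pos f_sc_le_f_ed assms(3-6) by auto
  have "(E, 0) \<in> ed_feasible B1 B2 fb1 fb2 qb1 qb2 0 E"
    using assms(9,10) S by (simp add: ed_feasible_def E_def)
  moreover have "(S, E - S) \<in> sc_feasible B1 B2 fb1 fb2 qb1 qb2 0 E"
    using assms(9,10) S by (simp add: sc_feasible_def ed_feasible_def E_def S_def)
  ultimately have feasible: "ed_feasible B1 B2 fb1 fb2 qb1 qb2 0 E \<noteq> {}"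
      "sc_feasible B1 B2 fb1 fb2 qb1 qb2 0 E \<noteq> {}"
    by auto
  then show "(qb1, qb2, 0, E) \<in> Omega B1 B2 fb1 fb2"
    using assms(9,10) S by (simp add: Omega_def)
  have "merit_order_q1 qb1 0 E S = S" "merit_order_q1 qb1 0 E E = E"
    using assms(9) S by (simp_all add: merit_order_q1_def)
  then show "PoS a1 a2 B1 B2 fb1 fb2 qb1 qb2 0 E = a2 / a1 - (a2 - a1) * S / (a1 * E)"
    using PoS_eq_merit_order_cost_ratio[OF assms(2-6) feasible] assms(1) S
    unfolding E_def[symmetric] S_def[symmetric] by (simp add: field_simps)
qed

theorem theorem1:
  fixes a1 a2 B1 B2 fb1 fb2 :: real
  assumes "0 < a1" "a1 \<le> a2" "0 < B1" "0 < B2" "0 < fb1" "0 < fb2"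
  shows "(SUP w \<in> Omega B1 B2 fb1 fb2.
            (case w of (qb1, qb2, d1, d2) \<Rightarrow> PoS a1 a2 B1 B2 fb1 fb2 qb1 qb2 d1 d2))
           = a2 / a1 - (a2 - a1) * f_sc fb1 fb2 / (a1 * f_ed B1 B2 fb1 fb2)
         \<and> (\<forall>qb1 qb2. f_ed B1 B2 fb1 fb2 \<le> qb1 \<longrightarrow>
            f_ed B1 B2 fb1 fb2 - f_sc fb1 fb2 \<le> qb2 \<longrightarrow>
            (qb1, qb2, 0, f_ed B1 B2 fb1 fb2) \<in> Omega B1 B2 fb1 fb2 \<and>
            PoS a1 a2 B1 B2 fb1 fb2 qb1 qb2 0 (f_ed B1 B2 fb1 fb2)
              = a2 / a1 - (a2 - a1) * f_sc fb1 fb2 / (a1 * f_ed B1 B2 fb1 fb2))"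
proof -
  define E where "E = f_ed B1 B2 fb1 fb2"
  define S where "S = f_sc fb1 fb2"
  let ?PoS = "\<lambda>w. case w of (qb1, qb2, d1, d2) \<Rightarrow> PoS a1 a2 B1 B2 fb1 fb2 qb1 qb2 d1 d2"
  have "E - S \<le> E"
    using f_sc_pos[OF assms(5,6)] by (simp add: S_def)
  note extremal = PoS_extremal_instance[OF assms, folded E_def S_def]
  have "(SUP w \<in> Omega B1 B2 fb1 fb2. ?PoS w) = a2 / a1 - (a2 - a1) * S / (a1 * E)"
  proof (rule cSup_eq_maximum)
    show "a2 / a1 - (a2 - a1) * S / (a1 * E) \<in> ?PoS ` Omega B1 B2 fb1 fb2"
      using extremal[OF order_refl \<open>E - S \<le> E\<close>] by force
    show "c \<le> a2 / a1 - (a2 - a1) * S / (a1 * E)" if "c \<in> ?PoS ` Omega B1 B2 fb1 fb2" for c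
      using that PoS_le[OF assms] unfolding E_def S_def by auto
  qed
  then show ?thesis
    using extremal unfolding E_def S_def by blast
qed

end
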